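(* Let $\lambda>0$, $\xi>0$, $v_2<v_1$ with either $v_2<0<v_1$ or $0<v_2<v_1$. Let $X(t)$ be the extended telegraph process driven by GCPs with parameter $\lambda$ (no resets) and $\tilde X(t)$ the same process subject to Poissonian resets to the origin at rate $\xi$, both started at the origin with velocity $v_j$, and let $E_j$ denote the corresponding conditional expectations. Define the mean-square distance $\Delta_j^\lambda(\xi,t):=E_j[\tilde X^2(t)]+E_j[X^2(t)]-2E_j[\tilde X(t)]\,E_j[X(t)]$. Then for $t\ge0$ and $j=1,2$, $$\Delta_j^\lambda(\xi,t)=E_j[X^2(t)]+A_j^\lambda(\xi,t),\qquad E_j[X^2(t)]=\frac{t^2[3v_j^2+\lambda t(v_1^2+v_1v_2+v_2^2)]}{3(1+\lambda t)},$$ where $$ \begin{aligned} A_j^\lambda(\xi,t)&=-te^{-\xi t}\Big[\frac{2v_j^2-v_1v_2-v_{3-j}^2}{3\lambda(1+\lambda t)}+\frac{2(v_1^2+v_1v_2+v_2^2)}{3\xi}+\frac{t(v_j-v_{3-j})[2v_j+\lambda t(v_1+v_2)]}{2(1+\lambda t)^2}\Big]\\ &\quad+(1-e^{-\xi t})\Big[\frac{2(v_1^2+v_1v_2+v_2^2)}{3\xi^2}+\frac{2v_j^2-v_1v_2-v_{3-j}^2}{3\lambda}\Big(\frac1\xi-\frac1\lambda\Big)-\frac{t(2v_j+\lambda t(v_1+v_2))}{2(1+\lambda t)}\Big(\frac{v_j-v_{3-j}}{\lambda}+\frac{v_1+v_2}{\xi}\Big)\Big]\\ &\quad+\frac{e^{\xi/\lambda}\xi}{\lambda^2}G_\xi(t)\Big[\frac{2v_j^2-v_1v_2-v_{3-j}^2}{3\lambda}+\frac{t(v_j-v_{3-j})(2v_j+\lambda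 t(v_1+v_2))}{2(1+\lambda t)}\Big], \end{aligned} $$ with $G_\xi(t)=\Gamma[0,\frac\xi\lambda,\frac\xi\lambda(1+\lambda t)]$.
   Context: GCP with intensity $\lambda>0$: a Poisson process whose rate is random, exponentially distributed with mean $\lambda$; increments satisfy $P\{\tilde N_\lambda(t+s)-\tilde N_\lambda(t)=k\}=\frac{1}{1+\lambda s}(\frac{\lambda s}{1+\lambda s})^k$. Process without resets $X(t)$: a particle starts at the origin with velocity $v_j$ ($v_1,v_2\ne0$, $v_2<v_1$), moves with velocity alternating between $v_1$ and $v_2$, the periods at velocity $v_1$ and at $v_2$ governed by two independent GCPs of intensity $\lambda$; its law given $V(0)=v_j$ has generalized density $p(x,t|v_j)=\frac{\delta(x-v_jt)}{1+\lambda t}+\mathbb 1_{\{v_2t<x<v_1t\}}\frac{\lambda}{(v_1-v_2)(1+\lambda t)}$ ($\delta$ Dirac delta), and it is known that $E_j[X(t)]=\frac{t[2v_j+\lambda t(v_1+v_2)]}{2(1+\lambda t)}$. Reset process $\tilde X(t)$: same dynamics but instantaneously reset to the origin at the epochs of an independent Poisson process of rate $\xi$, restarting afresh with velocity $v_j$; its density is $\tilde p(x,t|v_j)=e^{-\xi t}p(x,t|v_j)+\xi\int_0^te^{-\xi s}p(x,s|v_j)ds$. $\Gamma(a,z_0,z_1)=\int_{z_0}^{z_1}s^{a-1}e^{-s}ds$. *)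

theory Defs
  imports "HOL-Analysis.Analysis"
begin

definition vel :: "real \<Rightarrow> real \<Rightarrow> nat \<Rightarrow> real" where
  "vel v1 v2 j = (if j = 1 then v1 else v2)"

text \<open>Expectation of f(X(t)) given V(0) = vj for the process without resets, i.e. integration of
  f against the generalized density
  p(x,t|vj) = delta(x - vj t)/(1+lam t) + 1_{v2 t < x < v1 t} lam/((v1-v2)(1+lam t)).\<close>
definition E_free :: "real \<Rightarrow> real \<Rightarrow> real \<Rightarrow> real \<Rightarrow> real \<Rightarrow> (real \<Rightarrow> real) \<Rightarrow> real" where
  "E_free lam v1 v2 vj t f =
     f (vj * t) / (1 + lam * t)
     + lam / ((v1 - v2) * (1 + lam * t)) * integral {v2 * t .. v1 * t} f"

text \<open>Expectation of f(X~(t)) for the reset process, whose density is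
  e^{-xi t} p(x,t|vj) + xi int_0^t e^{-xi s} p(x,s|vj) ds.\<close>
definition E_reset :: "real \<Rightarrow> real \<Rightarrow> real \<Rightarrow> real \<Rightarrow> real \<Rightarrow> real \<Rightarrow> (real \<Rightarrow> real) \<Rightarrow> real" where
  "E_reset lam xi v1 v2 vj t f =
     exp (- xi * t) * E_free lam v1 v2 vj t f
     + xi * integral {0 .. t} (\<lambda>s. exp (- xi * s) * E_free lam v1 v2 vj s f)"

definition Delta :: "real \<Rightarrow> real \<Rightarrow> real \<Rightarrow> real \<Rightarrow> real \<Rightarrow> real \<Rightarrow> real" where
  "Delta lam xi v1 v2 vj t =
     E_reset lam xi v1 v2 vj t (\<lambda>x. x ^ 2) + E_free lam v1 v2 vj t (\<lambda>x. x ^ 2)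
     - 2 * E_reset lam xi v1 v2 vj t (\<lambda>x. x) * E_free lam v1 v2 vj t (\<lambda>x. x)"

definition Gamma_gen :: "real \<Rightarrow> real \<Rightarrow> real \<Rightarrow> real" where
  "Gamma_gen a z0 z1 = integral {z0 .. z1} (\<lambda>s. s powr (a - 1) * exp (- s))"

end

theory Submission
  imports Defs
begin

(*
  Both free moments are rational in s with a single simple pole at s = -1/lam, so partial
  fractions write each as a quadratic polynomial in s plus K / (1 + lam s). In the reset
  moments exp(-xi t) E_j[f(X(t))] + xi int_0^t exp(-xi s) E_j[f(X(s))] ds the polynomial part
  integrates in closed form, while the substitution u = xi/lam (1 + lam s) turns the pole part
  into the incomplete Gamma integral Gamma(0, xi/lam, xi/lam (1 + lam t)). The formula for
  Delta is then a regrouping of E[X~^2] + E[X^2] - 2 E[X~] E[X].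
*)

lemma has_integral_power_real:
  fixes a b :: real
  assumes "a \<le> b"
  shows "((\<lambda>x. x ^ n) has_integral (b ^ Suc n - a ^ Suc n) / Suc n) {a..b}"
proof -
  have "((\<lambda>x. x ^ Suc n / Suc n) has_real_derivative x ^ n) (at x)" for x :: real
    by (intro derivative_eq_intros) auto
  then have "((\<lambda>x. x ^ n) has_integral (b ^ Suc n / Suc n - a ^ Suc n / Suc n)) {a..b}"
    using assms
    by (intro fundamental_theorem_of_calculus)
       (auto simp: has_real_derivative_iff_has_vector_derivative[symmetric] has_field_derivative_at_within)
  then show ?thesis
    by (simp add: diff_divide_distrib)
qed

lemma E_free_moment:
  fixes lam v1 v2 vj s :: real
  assumes "v2 < v1" "s \<ge> 0"
  shows "E_free lam v1 v2 vj s (\<lambda>x. x ^ n) =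
    s ^ n * (vj ^ n + lam * s * ((v1 ^ Suc n - v2 ^ Suc n) / (Suc n * (v1 - v2)))) / (1 + lam * s)"
proof -
  have "v2 * s \<le> v1 * s"
    using assms by (simp add: mult_right_mono)
  from integral_unique[OF has_integral_power_real[OF this]]
  have "integral {v2 * s..v1 * s} (\<lambda>x. x ^ n) = s ^ Suc n * (v1 ^ Suc n - v2 ^ Suc n) / Suc n"
    by (simp add: power_mult_distrib algebra_simps)
  then have "E_free lam v1 v2 vj s (\<lambda>x. x ^ n) =
      ((vj * s) ^ n + lam / (v1 - v2) * (s ^ Suc n * (v1 ^ Suc n - v2 ^ Suc n) / Suc n)) / (1 + lam * s)"
    by (simp add: E_free_def add_divide_distrib)
  also have "\<dots> = s ^ n * (vj ^ n + lam * s * ((v1 ^ Suc n - v2 ^ Suc n) / (Suc n * (v1 - v2)))) / (1 + lam * s)"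
    by (simp add: power_mult_distrib distrib_left mult_ac)
  finally show ?thesis .
qed

lemma E_free_mean:
  fixes lam v1 v2 vj s :: real
  assumes "v2 < v1" "s \<ge> 0"
  shows "E_free lam v1 v2 vj s (\<lambda>x. x) = s * (2 * vj + lam * s * (v1 + v2)) / (2 * (1 + lam * s))"
proof -
  have "(v1 ^ Suc 1 - v2 ^ Suc 1) / (Suc 1 * (v1 - v2)) = (v1 + v2) / 2"
    using assms by (simp add: power2_eq_square field_simps)
  from E_free_moment[OF assms, of lam vj 1, unfolded this power_one_right]
  show ?thesis
    by (simp add: field_simps)
qed

lemma E_free_second_moment:
  fixes lam v1 v2 vj s :: real
  assumes "v2 < v1" "s \<ge> 0"
  shows "E_free lam v1 v2 vj s (\<lambda>x. x\<^sup>2) =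
    s\<^sup>2 * (3 * vj\<^sup>2 + lam * s * (v1\<^sup>2 + v1 * v2 + v2\<^sup>2)) / (3 * (1 + lam * s))"
proof -
  have "(v1 ^ Suc 2 - v2 ^ Suc 2) / (Suc 2 * (v1 - v2)) = (v1\<^sup>2 + v1 * v2 + v2\<^sup>2) / 3"
    using assms by (simp add: power2_eq_square power3_eq_cube field_simps)
  from E_free_moment[OF assms, of lam vj 2, unfolded this]
  show ?thesis
    by (simp add: field_simps)
qed

lemma E_free_mean_partial_fractions:
  fixes lam v1 v2 vj s :: real
  assumes "lam > 0" "v2 < v1" "s \<ge> 0"
  shows "E_free lam v1 v2 vj s (\<lambda>x. x) =
    (v1 + v2) / 2 * s + (2 * vj - v1 - v2) / (2 * lam) + (v1 + v2 - 2 * vj) / (2 * lam) / (1 + lam * s)"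
proof -
  define u where "u = 1 + lam * s"
  have "u > 0"
    using assms by (simp add: u_def add_pos_nonneg)
  then show ?thesis
    unfolding E_free_mean[OF assms(2,3)] u_def[symmetric] using assms
    by (simp add: field_simps) (simp add: u_def algebra_simps)
qed

lemma E_free_second_moment_partial_fractions:
  fixes lam v1 v2 vj s :: real
  defines "S \<equiv> v1\<^sup>2 + v1 * v2 + v2\<^sup>2"
  assumes "lam > 0" "v2 < v1" "s \<ge> 0"
  shows "E_free lam v1 v2 vj s (\<lambda>x. x\<^sup>2) =
    S / 3 * s\<^sup>2 + (3 * vj\<^sup>2 - S) / (3 * lam) * s + (S - 3 * vj\<^sup>2) / (3 * lam\<^sup>2)
    + (3 * vj\<^sup>2 - S) / (3 * lam\<^sup>2) / (1 + lam * s)"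
proof -
  define u where "u = 1 + lam * s"
  have "u > 0"
    using assms by (simp add: u_def add_pos_nonneg)
  then show ?thesis
    unfolding E_free_second_moment[OF \<open>v2 < v1\<close> \<open>s \<ge> 0\<close>] S_def u_def[symmetric] using assms
    by (simp add: field_simps power2_eq_square) (simp add: u_def algebra_simps)
qed

lemma has_integral_exp_times_quadratic:
  fixes xi a b c t :: real
  assumes "xi \<noteq> 0" "t \<ge> 0"
  shows "((\<lambda>s. exp (- xi * s) * (a * s\<^sup>2 + b * s + c)) has_integral
    ((1 - exp (- xi * t)) * (2 * a / xi\<^sup>2 + b / xi + c) - exp (- xi * t) * (a * t\<^sup>2 + (2 * a / xi + b) * t)) / xi)
    {0..t}"
proof -
  define P where "P s = a * s\<^sup>2 + (2 * a / xi + b) * s + 2 * a / xi\<^sup>2 + b / xi + c" for s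
  have "((\<lambda>s. - exp (- xi * s) * P s / xi) has_real_derivative exp (- xi * s) * (a * s\<^sup>2 + b * s + c)) (at s)"
    for s
    unfolding P_def using assms
    by (auto intro!: derivative_eq_intros simp: field_simps power2_eq_square power3_eq_cube)
  then have "((\<lambda>s. exp (- xi * s) * (a * s\<^sup>2 + b * s + c)) has_integral
      (- exp (- xi * t) * P t / xi - (- exp (- xi * 0) * P 0 / xi))) {0..t}"
    using assms
    by (intro fundamental_theorem_of_calculus)
       (auto simp: has_real_derivative_iff_has_vector_derivative[symmetric] has_field_derivative_at_within)
  moreover have "- exp (- xi * t) * P t / xi - (- exp (- xi * 0) * P 0 / xi) =
      ((1 - exp (- xi * t)) * (2 * a / xi\<^sup>2 + b / xi + c) - exp (- xi * t) * (a * t\<^sup>2 + (2 * a / xi + b) * t)) / xi"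
    by (simp add: P_def algebra_simps diff_divide_distrib add_divide_distrib)
  ultimately show ?thesis
    by simp
qed

lemma has_integral_exp_times_affine_powr:
  fixes xi lam a t :: real
  assumes "xi > 0" "lam > 0" "t \<ge> 0"
  shows "((\<lambda>s. exp (- xi * s) * (1 + lam * s) powr (a - 1)) has_integral
    exp (xi / lam) / xi * (lam / xi) powr (a - 1) * Gamma_gen a (xi / lam) (xi / lam * (1 + lam * t))) {0..t}"
proof -
  define g where "g s = xi / lam * (1 + lam * s)" for s
  define f where "f u = u powr (a - 1) * exp (- u)" for u
  define C where "C = exp (xi / lam) / xi * (lam / xi) powr (a - 1)"
  have g_mono: "g s \<le> g s'" if "s \<le> s'" for s s'
    unfolding g_def using assms that by (intro mult_left_mono) auto
  have "((\<lambda>s. xi *\<^sub>R f (g s)) has_integral integral {g 0..g t} f) {0..t}"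
  proof (rule has_integral_substitution[where c = "g 0" and d = "g t"])
    show "g 0 \<le> g t" "g ` {0..t} \<subseteq> {g 0..g t}"
      using assms g_mono by auto
    have "g 0 > 0"
      using assms by (simp add: g_def)
    then show "continuous_on {g 0..g t} f"
      unfolding f_def by (intro continuous_intros) auto
    show "(g has_field_derivative xi) (at s within {0..t})" for s
      unfolding g_def using assms by (auto intro!: derivative_eq_intros)
  qed (use assms in auto)
  then have scaled: "((\<lambda>s. C * (xi *\<^sub>R f (g s))) has_integral C * integral {g 0..g t} f) {0..t}"
    by (rule has_integral_mult_right)
  have integrand_eq: "C * (xi *\<^sub>R f (g s)) = exp (- xi * s) * (1 + lam * s) powr (a - 1)"
    if "s \<in> {0..t}" for s
  proof -
    have "1 + lam * s > 0"
      using assms that by (simp add: add_pos_nonneg)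
    then have powr_eq: "(lam / xi) powr (a - 1) * g s powr (a - 1) = (1 + lam * s) powr (a - 1)"
      using assms by (simp add: g_def powr_mult[symmetric])
    have exp_eq: "exp (xi / lam) * exp (- g s) = exp (- xi * s)"
      using assms by (simp add: g_def exp_add[symmetric] field_simps)
    have "E / xi * P * (xi * (G * F)) = (P * G) * (E * F)" for E P G F :: real
      using assms by simp
    then have "C * (xi *\<^sub>R f (g s)) =
        ((lam / xi) powr (a - 1) * g s powr (a - 1)) * (exp (xi / lam) * exp (- g s))"
      unfolding C_def f_def real_scaleR_def .
    also have "\<dots> = exp (- xi * s) * (1 + lam * s) powr (a - 1)"
      unfolding powr_eq exp_eq by (rule mult.commute)
    finally show ?thesis .
  qed
  have "C * integral {g 0..g t} f =
      exp (xi / lam) / xi * (lam / xi) powr (a - 1) * Gamma_gen a (xi / lam) (xi / lam * (1 + lam * t))"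
    by (simp add: C_def Gamma_gen_def g_def f_def[abs_def])
  with has_integral_cong[THEN iffD1, OF integrand_eq scaled]
  show ?thesis
    by simp
qed

lemma has_integral_exp_div_affine:
  fixes xi lam t :: real
  assumes "xi > 0" "lam > 0" "t \<ge> 0"
  shows "((\<lambda>s. exp (- xi * s) / (1 + lam * s)) has_integral
    exp (xi / lam) / lam * Gamma_gen 0 (xi / lam) (xi / lam * (1 + lam * t))) {0..t}"
proof -
  have "exp (xi / lam) / xi * (lam / xi) powr (0 - 1) = exp (xi / lam) / lam"
    using assms by simp
  note integral = has_integral_exp_times_affine_powr[OF assms, of 0, unfolded this]
  have "exp (- xi * s) * (1 + lam * s) powr (0 - 1) = exp (- xi * s) / (1 + lam * s)"
    if "s \<in> {0..t}" for s
    using assms that by (simp add: add_pos_nonneg)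
  from has_integral_cong[THEN iffD1, OF this integral]
  show ?thesis .
qed

lemma E_reset_quadratic_plus_pole:
  fixes lam xi v1 v2 vj t a b c K :: real and f :: "real \<Rightarrow> real"
  assumes "lam > 0" "xi > 0" "t \<ge> 0"
    and moment: "\<And>s. s \<ge> 0 \<Longrightarrow> E_free lam v1 v2 vj s f = a * s\<^sup>2 + b * s + c + K / (1 + lam * s)"
  shows "E_reset lam xi v1 v2 vj t f =
    exp (- xi * t) * (E_free lam v1 v2 vj t f - a * t\<^sup>2 - (2 * a / xi + b) * t)
    + (1 - exp (- xi * t)) * (2 * a / xi\<^sup>2 + b / xi + c)
    + xi * K / lam * exp (xi / lam) * Gamma_gen 0 (xi / lam) (xi / lam * (1 + lam * t))"
proof -
  define G where "G = Gamma_gen 0 (xi / lam) (xi / lam * (1 + lam * t))"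
  define I where "I = ((1 - exp (- xi * t)) * (2 * a / xi\<^sup>2 + b / xi + c)
    - exp (- xi * t) * (a * t\<^sup>2 + (2 * a / xi + b) * t)) / xi + K * (exp (xi / lam) / lam * G)"
  have integral: "((\<lambda>s. exp (- xi * s) * (a * s\<^sup>2 + b * s + c) + K * (exp (- xi * s) / (1 + lam * s)))
      has_integral I) {0..t}"
    unfolding I_def G_def using assms
    by (intro has_integral_add has_integral_mult_right has_integral_exp_times_quadratic
        has_integral_exp_div_affine) auto
  have "exp (- xi * s) * (a * s\<^sup>2 + b * s + c) + K * (exp (- xi * s) / (1 + lam * s)) =
      exp (- xi * s) * E_free lam v1 v2 vj s f" if "s \<in> {0..t}" for s
    using that by (simp add: moment algebra_simps)
  from integral_unique[OF has_integral_cong[THEN iffD1, OF this integral]]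
  have "integral {0..t} (\<lambda>s. exp (- xi * s) * E_free lam v1 v2 vj s f) = I" .
  then show ?thesis
    using assms by (simp add: E_reset_def I_def G_def field_simps)
qed

lemma E_reset_mean:
  fixes lam xi v1 v2 vj t :: real
  assumes "lam > 0" "xi > 0" "v2 < v1" "t \<ge> 0"
  shows "E_reset lam xi v1 v2 vj t (\<lambda>x. x) =
    exp (- xi * t) * t * (2 * vj - v1 - v2) / (2 * (1 + lam * t))
    + (1 - exp (- xi * t)) * ((v1 + v2) / (2 * xi) + (2 * vj - v1 - v2) / (2 * lam))
    - xi * (2 * vj - v1 - v2) / (2 * lam\<^sup>2) * (exp (xi / lam) * Gamma_gen 0 (xi / lam) (xi / lam * (1 + lam * t)))"
proof -
  have "E_free lam v1 v2 vj s (\<lambda>x. x) = 0 * s\<^sup>2 + (v1 + v2) / 2 * s + (2 * vj - v1 - v2) / (2 * lam)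
      + (v1 + v2 - 2 * vj) / (2 * lam) / (1 + lam * s)" if "s \<ge> 0" for s
    using E_free_mean_partial_fractions[OF assms(1,3) that] by simp
  note reset = E_reset_quadratic_plus_pole[OF assms(1,2,4) this]
  have "1 + lam * t > 0"
    using assms by (simp add: add_pos_nonneg)
  then have decay: "E_free lam v1 v2 vj t (\<lambda>x. x) - 0 * t\<^sup>2 - (2 * 0 / xi + (v1 + v2) / 2) * t =
      t * (2 * vj - v1 - v2) / (2 * (1 + lam * t))"
    unfolding E_free_mean[OF assms(3,4)] by (simp add: field_simps)
  have limit: "2 * 0 / xi\<^sup>2 + (v1 + v2) / 2 / xi + (2 * vj - v1 - v2) / (2 * lam) =
      (v1 + v2) / (2 * xi) + (2 * vj - v1 - v2) / (2 * lam)"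
    by simp
  have pole: "xi * ((v1 + v2 - 2 * vj) / (2 * lam)) / lam = - xi * (2 * vj - v1 - v2) / (2 * lam\<^sup>2)"
    by (simp add: power2_eq_square algebra_simps)
  show ?thesis
    using reset unfolding decay limit pole by simp
qed

lemma E_reset_second_moment:
  fixes lam xi v1 v2 vj t :: real
  defines "S \<equiv> v1\<^sup>2 + v1 * v2 + v2\<^sup>2"
  assumes "lam > 0" "xi > 0" "v2 < v1" "t \<ge> 0"
  shows "E_reset lam xi v1 v2 vj t (\<lambda>x. x\<^sup>2) =
    - exp (- xi * t) * t * ((3 * vj\<^sup>2 - S) / (3 * lam * (1 + lam * t)) + 2 * S / (3 * xi))
    + (1 - exp (- xi * t)) * (2 * S / (3 * xi\<^sup>2) + (3 * vj\<^sup>2 - S) / (3 * lam) * (1 / xi - 1 / lam))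
    + xi * (3 * vj\<^sup>2 - S) / (3 * lam ^ 3) * (exp (xi / lam) * Gamma_gen 0 (xi / lam) (xi / lam * (1 + lam * t)))"
proof -
  note reset = E_reset_quadratic_plus_pole[OF assms(2,3,5)
      E_free_second_moment_partial_fractions[OF assms(2,4), where vj = vj, folded S_def]]
  define u where "u = 1 + lam * t"
  have "u > 0"
    using assms by (simp add: u_def add_pos_nonneg)
  then have decay: "E_free lam v1 v2 vj t (\<lambda>x. x\<^sup>2) - S / 3 * t\<^sup>2 - (2 * (S / 3) / xi + (3 * vj\<^sup>2 - S) / (3 * lam)) * t =
      - t * ((3 * vj\<^sup>2 - S) / (3 * lam * (1 + lam * t)) + 2 * S / (3 * xi))"
    unfolding E_free_second_moment[OF assms(4,5)] S_def u_def[symmetric] using assms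
    by (simp add: field_simps power2_eq_square) (simp add: u_def algebra_simps)
  have limit: "2 * (S / 3) / xi\<^sup>2 + (3 * vj\<^sup>2 - S) / (3 * lam) / xi + (S - 3 * vj\<^sup>2) / (3 * lam\<^sup>2) =
      2 * S / (3 * xi\<^sup>2) + (3 * vj\<^sup>2 - S) / (3 * lam) * (1 / xi - 1 / lam)"
    using assms by (simp add: field_simps power2_eq_square)
  have pole: "xi * ((3 * vj\<^sup>2 - S) / (3 * lam\<^sup>2)) / lam = xi * (3 * vj\<^sup>2 - S) / (3 * lam ^ 3)"
    by (simp add: power2_eq_square power3_eq_cube)
  show ?thesis
    using reset unfolding decay limit pole by simp
qed

theorem theorem6:
  fixes lam xi v1 v2 t :: real and j :: nat
  assumes "lam > 0" and "xi > 0"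
    and "(v2 < 0 \<and> 0 < v1) \<or> (0 < v2 \<and> v2 < v1)"
    and "t \<ge> 0" and "j \<in> {1, 2}"
  shows "Delta lam xi v1 v2 (vel v1 v2 j) t =
           E_free lam v1 v2 (vel v1 v2 j) t (\<lambda>x. x ^ 2) +
           (let vj = vel v1 v2 j; vk = vel v1 v2 (3 - j);
                S = v1 ^ 2 + v1 * v2 + v2 ^ 2;
                B = 2 * vj ^ 2 - v1 * v2 - vk ^ 2;
                G = Gamma_gen 0 (xi / lam) (xi / lam * (1 + lam * t))
            in - t * exp (- xi * t) *
                 (B / (3 * lam * (1 + lam * t)) + 2 * S / (3 * xi)
                  + t * (vj - vk) * (2 * vj + lam * t * (v1 + v2)) / (2 * (1 + lam * t) ^ 2))
               + (1 - exp (- xi * t)) *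
                 (2 * S / (3 * xi ^ 2) + B / (3 * lam) * (1 / xi - 1 / lam)
                  - t * (2 * vj + lam * t * (v1 + v2)) / (2 * (1 + lam * t))
                    * ((vj - vk) / lam + (v1 + v2) / xi))
               + exp (xi / lam) * xi / lam ^ 2 * G *
                 (B / (3 * lam)
                  + t * (vj - vk) * (2 * vj + lam * t * (v1 + v2)) / (2 * (1 + lam * t))))
         \<and> E_free lam v1 v2 (vel v1 v2 j) t (\<lambda>x. x ^ 2) =
           t ^ 2 * (3 * (vel v1 v2 j) ^ 2 + lam * t * (v1 ^ 2 + v1 * v2 + v2 ^ 2))
             / (3 * (1 + lam * t))"
proof -
  define vj where "vj = vel v1 v2 j"
  define vk where "vk = vel v1 v2 (3 - j)"
  define S where "S = v1\<^sup>2 + v1 * v2 + v2\<^sup>2"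
  define B where "B = 2 * vj\<^sup>2 - v1 * v2 - vk\<^sup>2"
  have "(vj = v1 \<and> vk = v2) \<or> (vj = v2 \<and> vk = v1)"
    using assms(5) by (auto simp: vj_def vk_def vel_def)
  then have D: "2 * vj - v1 - v2 = vj - vk" and B: "3 * vj\<^sup>2 - S = B"
    by (auto simp: S_def B_def power2_eq_square)
  have "v2 < v1"
    using assms(3) by auto
  \<comment> \<open>Treating these as atoms keeps the final normalisation a linear regrouping.\<close>
  define e where "e = exp (- xi * t)"
  define u where "u = 1 + lam * t"
  define W where "W = exp (xi / lam) * Gamma_gen 0 (xi / lam) (xi / lam * u)"
  define F1 where "F1 = t * (2 * vj + lam * t * (v1 + v2)) / (2 * u)"
  note R1 = E_reset_mean[OF assms(1,2) \<open>v2 < v1\<close> assms(4), of vj, unfolded D, folded e_def u_def, folded W_def]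
  note R2 = E_reset_second_moment[OF assms(1,2) \<open>v2 < v1\<close> assms(4), of vj, folded S_def, unfolded B,
    folded e_def u_def, folded W_def]
  have F2: "E_free lam v1 v2 vj t (\<lambda>x. x\<^sup>2) = t\<^sup>2 * (3 * vj\<^sup>2 + lam * t * S) / (3 * u)"
    using E_free_second_moment[OF \<open>v2 < v1\<close> assms(4)] by (simp add: S_def u_def)
  have regroup:
    "t * (vj - vk) * (2 * vj + lam * t * (v1 + v2)) / (2 * u\<^sup>2) = (vj - vk) * F1 / u"
    "t * (vj - vk) * (2 * vj + lam * t * (v1 + v2)) / (2 * u) = (vj - vk) * F1"
    "exp (xi / lam) * xi / lam\<^sup>2 * Gamma_gen 0 (xi / lam) (xi / lam * u) = xi / lam\<^sup>2 * W"
    by (simp_all add: F1_def W_def power2_eq_square mult_ac)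
  show ?thesis
    unfolding Delta_def Let_def vj_def[symmetric] vk_def[symmetric] E_free_mean[OF \<open>v2 < v1\<close> assms(4)]
      R1 R2 e_def[symmetric] u_def[symmetric] F1_def[symmetric] S_def[symmetric] B_def[symmetric] regroup
    by (intro conjI)
      (simp add: algebra_simps add_divide_distrib diff_divide_distrib power2_eq_square power3_eq_cube, fact F2)
qed

end
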